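(* Let $d\ge1$, $T>0$, let $A\in\mathbb{R}^{d\times d}$ be symmetric positive semi-definite, let $V:\mathbb{R}^d\to\mathbb{R}$ be twice continuously differentiable, and let $U(y)=\frac12 y^{\intercal}Ay+V(y)$. Let $G:\mathbb{R}^d\to\mathbb{R}^{d\times d}$ be continuous with $G(y)$ symmetric and $v^{\intercal}G(y)v\ge v^{\intercal}\Gamma v>0$ for all $y$ and all $v\neq0$, for a fixed symmetric positive definite matrix $\Gamma$. Consider the gradient system $G(y(t))\dot y(t)=-\nabla U(y(t))$, $y(0)=y_0\in\mathbb{R}^d$. Let $\varphi_0,\ldots,\varphi_{r-1}$ be sufficiently smooth, linearly independent real functions on $[0,T]$, let $0<h\le T$, and let $X_h,Y_h,\mathcal{P}_h$ be as described in the context. Suppose $\tilde u\in X_h$ satisfies $\tilde u(0)=y_0$ and $$G(\tilde u(\tau))\,\tilde u'(\tau)+A\tilde u(\tau)=-\mathcal{P}_h\big(\nabla V(\tilde u(\cdot))\big)(\tau),\qquad\tau\in[0,1],$$ and set $y_1=\tilde u(1)$ (the EFFED method). Then $U(y_1)\le U(y_0)$.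
   Context: Function spaces: $Y_h$ is the set of $\mathbb{R}^d$-valued functions on $[0,1]$ of the form $\sum_{i=0}^{r-1}\tilde\varphi_i(\tau)W_i$ with $W_i\in\mathbb{R}^d$, where $\tilde\varphi_i(\tau)=\varphi_i(\tau h)$; $X_h$ is the set of $\mathbb{R}^d$-valued functions on $[0,1]$ of the form $W+\sum_{i=0}^{r-1}\big(\int_0^{\tau h}\varphi_i(s)\,ds\big)W_i$ with $W,W_i\in\mathbb{R}^d$. Equivalently $\tilde u(\tau)=u(\tau h)$ for $u$ in $X=\mathrm{span}\{1,\int_0^t\varphi_0,\ldots,\int_0^t\varphi_{r-1}\}$, and $\tilde u'(\tau)$ means $u'(\tau h)=\frac1h\frac{d}{d\tau}\tilde u(\tau)$, which lies in $Y_h$. Projection: for continuous $\tilde w:[0,1]\to\mathbb{R}^d$, $\mathcal{P}_h\tilde w$ is the unique element of $Y_h$ with $\int_0^1\tilde v(\tau)\cdot\mathcal{P}_h\tilde w(\tau)\,d\tau=\int_0^1\tilde v(\tau)\cdot\tilde w(\tau)\,d\tau$ for all $\tilde v\in Y_h$, where $\cdot$ denotes entrywise multiplication (so each component of $\mathcal{P}_h\tilde w$ is the $L^2(0,1)$-orthogonal projection of the corresponding component of $\tilde w$ onto $\mathrm{span}\{\tilde\varphi_0,\ldots,\tilde\varphi_{r-1}\}$). *)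

theory Defs
  imports "HOL-Analysis.Analysis"
begin

definition in_Yh :: "(nat \<Rightarrow> real \<Rightarrow> real) \<Rightarrow> nat \<Rightarrow> real \<Rightarrow> (real \<Rightarrow> real^'n) \<Rightarrow> bool" where
  "in_Yh phi r h v \<longleftrightarrow>
     (\<exists>Ws :: nat \<Rightarrow> real^'n. \<forall>\<tau>\<in>{0..1}. v \<tau> = (\<Sum>i<r. phi i (\<tau> * h) *\<^sub>R Ws i))"

text \<open>p is the projection P_h w: p in Y_h and the (entrywise) Galerkin orthogonality holds.\<close>
definition is_proj_Yh :: "(nat \<Rightarrow> real \<Rightarrow> real) \<Rightarrow> nat \<Rightarrow> real \<Rightarrow> (real \<Rightarrow> real^'n) \<Rightarrow> (real \<Rightarrow> real^'n) \<Rightarrow> bool" where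
  "is_proj_Yh phi r h w p \<longleftrightarrow> in_Yh phi r h p \<and>
     (\<forall>v. in_Yh phi r h v \<longrightarrow>
        integral {0..1} (\<lambda>\<tau>. v \<tau> * p \<tau>) = integral {0..1} (\<lambda>\<tau>. v \<tau> * w \<tau>))"

text \<open>The projection P_h w, evaluated at tau in [0,1] (unique value on [0,1]).\<close>
definition Ph :: "(nat \<Rightarrow> real \<Rightarrow> real) \<Rightarrow> nat \<Rightarrow> real \<Rightarrow> (real \<Rightarrow> real^'n) \<Rightarrow> real \<Rightarrow> real^'n" where
  "Ph phi r h w \<tau> = (THE y. \<exists>p. is_proj_Yh phi r h w p \<and> p \<tau> = y)"

end

theory Submission imports Defs begin

text \<open>With the collocation equation eliminating A u, the energy rate along the collocation
  solution is
    d/d\<tau> U(u \<tau>) = h u' \<bullet> (grad V(u) - P_h grad V(u)) - h u' \<bullet> G(u) u'.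
  Since u' lies in Y_h, Galerkin orthogonality makes the first term integrate to zero over [0,1],
  and the second term is nonpositive because G(y) dominates the positive definite \<Gamma>.
  The projection P_h is well defined without linear independence of the \<phi>_i: it is built
  componentwise by Gram--Schmidt, and two projections agree because their difference is
  orthogonal to itself.\<close>

lemma integral_mult_diff_sum_right:
  fixes g e :: "real \<Rightarrow> real" and f :: "nat \<Rightarrow> real \<Rightarrow> real"
  assumes g: "continuous_on {a..b} g" and e: "continuous_on {a..b} e"
    and f: "\<And>i. i < n \<Longrightarrow> continuous_on {a..b} (f i)"
  shows "integral {a..b} (\<lambda>t. g t * (e t - (\<Sum>i<n. c i * f i t))) =
         integral {a..b} (\<lambda>t. g t * e t) - (\<Sum>i<n. c i * integral {a..b} (\<lambda>t. g t * f i t))"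
proof -
  have "integral {a..b} (\<lambda>t. g t * (e t - (\<Sum>i<n. c i * f i t))) =
        integral {a..b} (\<lambda>t. g t * e t - (\<Sum>i<n. c i * (g t * f i t)))"
    by (simp add: right_diff_distrib sum_distrib_left mult.left_commute)
  also have "\<dots> = integral {a..b} (\<lambda>t. g t * e t) - integral {a..b} (\<lambda>t. \<Sum>i<n. c i * (g t * f i t))"
    by (rule integral_diff) (auto intro!: integrable_continuous_interval continuous_intros g e f)
  also have "integral {a..b} (\<lambda>t. \<Sum>i<n. c i * (g t * f i t)) = (\<Sum>i<n. integral {a..b} (\<lambda>t. c i * (g t * f i t)))"
    by (rule integral_sum) (auto intro!: integrable_continuous_interval continuous_intros g f)
  finally show ?thesis
    by simp
qed

lemma integral_mult_diff_scaled_right: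
  fixes g e k :: "real \<Rightarrow> real"
  assumes "continuous_on {a..b} g" "continuous_on {a..b} e" "continuous_on {a..b} k"
  shows "integral {a..b} (\<lambda>t. g t * (e t - c * k t)) =
         integral {a..b} (\<lambda>t. g t * e t) - c * integral {a..b} (\<lambda>t. g t * k t)"
  using integral_mult_diff_sum_right[of a b g e 1 "\<lambda>_. k" "\<lambda>_. c"] assms by simp

lemma integral_square_eq_0_imp_eq_0:
  fixes g :: "real \<Rightarrow> real"
  assumes "continuous_on {a..b} g" "a < b" "integral {a..b} (\<lambda>t. g t * g t) = 0" "t \<in> {a..b}"
  shows "g t = 0"
proof -
  have "continuous_on {a..b} (\<lambda>t. g t * g t)"
    by (intro continuous_on_mult assms(1))
  then show ?thesis
    using integral_eq_0_iff[of a b "\<lambda>t. g t * g t"] assms by auto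
qed

lemma integral_sum_mult_eq_0:
  fixes f :: "nat \<Rightarrow> real \<Rightarrow> real" and e :: "real \<Rightarrow> real"
  assumes f: "\<And>i. i < n \<Longrightarrow> continuous_on {a..b} (f i)" and e: "continuous_on {a..b} e"
    and orth: "\<And>j. j < n \<Longrightarrow> integral {a..b} (\<lambda>t. f j t * e t) = 0"
  shows "integral {a..b} (\<lambda>t. (\<Sum>i<n. c i * f i t) * e t) = 0"
proof -
  have "integral {a..b} (\<lambda>t. (\<Sum>i<n. c i * f i t) * e t) =
        (\<Sum>i<n. integral {a..b} (\<lambda>t. c i * (f i t * e t)))"
    unfolding sum_distrib_right mult.assoc
    by (rule integral_sum) (auto intro!: integrable_continuous_interval continuous_intros f e)
  then show ?thesis
    using orth by simp
qed

text \<open>A Gram--Schmidt step that needs no linear independence: if the residual g vanishes,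
  any \<alpha> works.\<close>
lemma orthogonal_residual_extend:
  fixes f :: "nat \<Rightarrow> real \<Rightarrow> real" and e g :: "real \<Rightarrow> real"
  assumes ab: "a < b" and f: "\<And>i. i \<le> n \<Longrightarrow> continuous_on {a..b} (f i)"
    and e: "continuous_on {a..b} e"
    and e_orth: "\<And>j. j < n \<Longrightarrow> integral {a..b} (\<lambda>t. f j t * e t) = 0"
    and g_def: "\<And>t. g t = f n t - (\<Sum>i<n. d i * f i t)"
    and g_orth: "\<And>j. j < n \<Longrightarrow> integral {a..b} (\<lambda>t. f j t * g t) = 0"
  shows "\<exists>\<alpha>. \<forall>j\<le>n. integral {a..b} (\<lambda>t. f j t * (e t - \<alpha> * g t)) = 0"
proof -
  have f_lt: "\<And>i. i < n \<Longrightarrow> continuous_on {a..b} (f i)"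
    using f by simp
  have g_eq: "g = (\<lambda>t. f n t - (\<Sum>i<n. d i * f i t))"
    using g_def by auto
  have g: "continuous_on {a..b} g"
    unfolding g_eq by (intro continuous_intros f) auto
  have against_g: "integral {a..b} (\<lambda>t. f n t * k t) = integral {a..b} (\<lambda>t. g t * k t)"
    if k: "continuous_on {a..b} k" and k_orth: "\<And>j. j < n \<Longrightarrow> integral {a..b} (\<lambda>t. f j t * k t) = 0"
    for k
  proof -
    have "integral {a..b} (\<lambda>t. k t * g t) =
          integral {a..b} (\<lambda>t. k t * f n t) - (\<Sum>i<n. d i * integral {a..b} (\<lambda>t. k t * f i t))"
      unfolding g_eq by (rule integral_mult_diff_sum_right[OF k f[OF order_refl] f_lt])
    also have "(\<Sum>i<n. d i * integral {a..b} (\<lambda>t. k t * f i t)) = 0"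
      using k_orth by (simp add: mult.commute)
    finally show ?thesis
      by (simp add: mult.commute)
  qed
  define \<alpha> where "\<alpha> = integral {a..b} (\<lambda>t. g t * e t) / integral {a..b} (\<lambda>t. g t * g t)"
  have \<alpha>: "integral {a..b} (\<lambda>t. g t * e t) = \<alpha> * integral {a..b} (\<lambda>t. g t * g t)"
  proof (cases "integral {a..b} (\<lambda>t. g t * g t) = 0")
    case True
    then have "g t * e t = 0" if "t \<in> {a..b}" for t
      using integral_square_eq_0_imp_eq_0[OF g ab True that] by simp
    then have "integral {a..b} (\<lambda>t. g t * e t) = 0"
      by (intro integral_unique has_integral_is_0)
    then show ?thesis
      using True by simp
  qed (simp add: \<alpha>_def)
  have "integral {a..b} (\<lambda>t. f j t * (e t - \<alpha> * g t)) = 0" if j: "j \<le> n" for j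
  proof -
    have "integral {a..b} (\<lambda>t. f j t * (e t - \<alpha> * g t)) =
          integral {a..b} (\<lambda>t. f j t * e t) - \<alpha> * integral {a..b} (\<lambda>t. f j t * g t)"
      using j by (intro integral_mult_diff_scaled_right f e g)
    also have "\<dots> = 0"
    proof (cases "j < n")
      case True
      then show ?thesis
        by (simp add: e_orth g_orth)
    next
      case False
      then have "j = n"
        using j by simp
      then show ?thesis
        using \<alpha> against_g[OF e e_orth] against_g[OF g g_orth] by simp
    qed
    finally show ?thesis .
  qed
  then show ?thesis
    by blast
qed

lemma exists_orthogonal_residual:
  fixes f :: "nat \<Rightarrow> real \<Rightarrow> real" and w :: "real \<Rightarrow> real"
  assumes "a < b" and "\<And>i. i < n \<Longrightarrow> continuous_on {a..b} (f i)" and "continuous_on {a..b} w"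
  shows "\<exists>c. \<forall>j<n. integral {a..b} (\<lambda>t. f j t * (w t - (\<Sum>i<n. c i * f i t))) = 0"
  using assms(2,3)
proof (induction n arbitrary: w)
  case (Suc n)
  have f: "\<And>i. i \<le> n \<Longrightarrow> continuous_on {a..b} (f i)"
    using Suc.prems(1) by simp
  then have f_lt: "\<And>i. i < n \<Longrightarrow> continuous_on {a..b} (f i)"
    by simp
  obtain c where c: "\<forall>j<n. integral {a..b} (\<lambda>t. f j t * (w t - (\<Sum>i<n. c i * f i t))) = 0"
    using Suc.IH[OF f_lt Suc.prems(2)] by blast
  obtain d where d: "\<forall>j<n. integral {a..b} (\<lambda>t. f j t * (f n t - (\<Sum>i<n. d i * f i t))) = 0"
    using Suc.IH[OF f_lt f[OF order_refl]] by blast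
  have e: "continuous_on {a..b} (\<lambda>t. w t - (\<Sum>i<n. c i * f i t))"
    using f by (intro continuous_intros Suc.prems(2)) auto
  obtain \<alpha> where \<alpha>: "\<forall>j\<le>n. integral {a..b}
      (\<lambda>t. f j t * ((w t - (\<Sum>i<n. c i * f i t)) - \<alpha> * (f n t - (\<Sum>i<n. d i * f i t)))) = 0"
    using orthogonal_residual_extend[where e = "\<lambda>t. w t - (\<Sum>i<n. c i * f i t)"
        and g = "\<lambda>t. f n t - (\<Sum>i<n. d i * f i t)" and d = d and f = f and n = n,
        OF assms(1) f e] c d
    by auto
  define c' where "c' i = (if i < n then c i - \<alpha> * d i else \<alpha>)" for i
  have residual: "w t - (\<Sum>i<Suc n. c' i * f i t) =
        (w t - (\<Sum>i<n. c i * f i t)) - \<alpha> * (f n t - (\<Sum>i<n. d i * f i t))" for t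
  proof -
    have "(\<Sum>i<n. c' i * f i t) = (\<Sum>i<n. c i * f i t) - \<alpha> * (\<Sum>i<n. d i * f i t)"
      by (simp add: c'_def sum_distrib_left left_diff_distrib sum_subtractf mult.assoc)
    then show ?thesis
      by (simp add: c'_def algebra_simps)
  qed
  have "\<forall>j<Suc n. integral {a..b} (\<lambda>t. f j t * (w t - (\<Sum>i<Suc n. c' i * f i t))) = 0"
    unfolding residual using \<alpha> by (simp add: less_Suc_eq_le)
  then show ?case
    by blast
qed simp

lemma continuous_on_vec_mult:
  fixes X Y :: "real \<Rightarrow> real^'n"
  assumes "continuous_on S X" "continuous_on S Y"
  shows "continuous_on S (\<lambda>t. X t * Y t)"
proof -
  have "(\<lambda>t. X t * Y t) = (\<lambda>t. \<chi> k. X t $ k * Y t $ k)"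
    by (simp add: vec_eq_iff fun_eq_iff)
  moreover have "continuous_on S (\<lambda>t. \<chi> k. X t $ k * Y t $ k)"
    by (intro continuous_on_vec_lambda continuous_intros assms)
  ultimately show ?thesis
    by metis
qed

lemma integral_vec_mult_component:
  fixes X Y :: "real \<Rightarrow> real^'n"
  assumes "continuous_on {a..b} X" "continuous_on {a..b} Y"
  shows "integral {a..b} (\<lambda>t. X t * Y t) $ k = integral {a..b} (\<lambda>t. X t $ k * Y t $ k)"
  using integral_component_eq_cart[OF integrable_continuous_interval[OF continuous_on_vec_mult[OF assms]]]
  by simp

lemma continuous_on_rescale:
  fixes f :: "real \<Rightarrow> 'a::topological_space"
  assumes "continuous_on {0..T} f" "0 \<le> h" "h \<le> T"
  shows "continuous_on {0..1} (\<lambda>t. f (t * h))"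
proof (rule continuous_on_compose2[OF assms(1)])
  show "continuous_on {0..1} (\<lambda>t::real. t * h)"
    by (intro continuous_intros)
  show "(\<lambda>t. t * h) ` {0..1} \<subseteq> {0..T}"
    using assms by (auto intro: order_trans[OF mult_left_le_one_le])
qed

lemma continuous_on_Yh_comb:
  assumes "\<And>i. i < r \<Longrightarrow> continuous_on {0..1} (\<lambda>t. phi i (t * h))"
  shows "continuous_on {0..1} (\<lambda>t. \<Sum>i<r. phi i (t * h) *\<^sub>R (Ws i :: real^'n))"
  using assms by (intro continuous_intros) auto

lemma in_Yh_continuous_on:
  assumes "\<And>i. i < r \<Longrightarrow> continuous_on {0..1} (\<lambda>t. phi i (t * h))" and "in_Yh phi r h v"
  shows "continuous_on {0..1} v"
proof -
  obtain Ws where Ws: "\<forall>\<tau>\<in>{0..1}. v \<tau> = (\<Sum>i<r. phi i (\<tau> * h) *\<^sub>R Ws i)"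
    using assms(2) unfolding in_Yh_def by blast
  show ?thesis
    by (rule continuous_on_eq[OF continuous_on_Yh_comb[OF assms(1)]]) (use Ws in auto)
qed

lemma in_Yh_diff:
  assumes "in_Yh phi r h v" "in_Yh phi r h v'"
  shows "in_Yh phi r h (\<lambda>t. v t - v' t)"
proof -
  obtain Ws Ws' where "\<forall>\<tau>\<in>{0..1}. v \<tau> = (\<Sum>i<r. phi i (\<tau> * h) *\<^sub>R Ws i)"
    and "\<forall>\<tau>\<in>{0..1}. v' \<tau> = (\<Sum>i<r. phi i (\<tau> * h) *\<^sub>R Ws' i)"
    using assms unfolding in_Yh_def by blast
  then show ?thesis
    unfolding in_Yh_def
    by (intro exI[of _ "\<lambda>i. Ws i - Ws' i"]) (simp add: scaleR_diff_right sum_subtractf)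
qed

lemma is_proj_Yh_unique:
  assumes basis: "\<And>i. i < r \<Longrightarrow> continuous_on {0..1} (\<lambda>t. phi i (t * h))"
    and p1: "is_proj_Yh phi r h w p1" and p2: "is_proj_Yh phi r h w p2" and \<tau>: "\<tau> \<in> {0..1}"
  shows "p1 \<tau> = p2 \<tau>"
proof -
  define v where "v = (\<lambda>t. p1 t - p2 t)"
  have p1_Y: "in_Yh phi r h p1" and p2_Y: "in_Yh phi r h p2"
    using p1 p2 unfolding is_proj_Yh_def by auto
  then have v_Y: "in_Yh phi r h v"
    unfolding v_def by (rule in_Yh_diff)
  have p1_cont: "continuous_on {0..1} p1"
    by (rule in_Yh_continuous_on[of r phi h, OF basis p1_Y])
  have p2_cont: "continuous_on {0..1} p2"
    by (rule in_Yh_continuous_on[of r phi h, OF basis p2_Y])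
  have v_cont: "continuous_on {0..1} v"
    unfolding v_def using p1_cont p2_cont by (intro continuous_intros)
  have "integral {0..1} (\<lambda>t. v t * v t) = integral {0..1} (\<lambda>t. v t * p1 t - v t * p2 t)"
    by (simp add: v_def right_diff_distrib)
  also have "\<dots> = integral {0..1} (\<lambda>t. v t * p1 t) - integral {0..1} (\<lambda>t. v t * p2 t)"
    by (intro integral_diff integrable_continuous_interval continuous_on_vec_mult v_cont p1_cont p2_cont)
  also have "\<dots> = 0"
    using p1 p2 v_Y unfolding is_proj_Yh_def by simp
  finally have "integral {0..1} (\<lambda>t. v t $ k * v t $ k) = 0" for k
    using integral_vec_mult_component[OF v_cont v_cont, of k] by simp
  moreover have "continuous_on {0..1} (\<lambda>t. v t $ k)" for k
    using v_cont by (intro continuous_intros)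
  ultimately have "v \<tau> $ k = 0" for k
    using integral_square_eq_0_imp_eq_0[of 0 1 "\<lambda>t. v t $ k" \<tau>] \<tau> by simp
  then show ?thesis
    by (simp add: vec_eq_iff v_def)
qed

lemma is_proj_Yh_if_orthogonal_components:
  fixes w :: "real \<Rightarrow> real^'n" and Ps :: "nat \<Rightarrow> real^'n"
  assumes basis: "\<And>i. i < r \<Longrightarrow> continuous_on {0..1} (\<lambda>t. phi i (t * h))"
    and w: "continuous_on {0..1} w"
    and orth: "\<And>k j. j < r \<Longrightarrow>
      integral {0..1} (\<lambda>t. phi j (t * h) * (w t $ k - (\<Sum>i<r. Ps i $ k * phi i (t * h)))) = 0"
  shows "is_proj_Yh phi r h w (\<lambda>t. \<Sum>i<r. phi i (t * h) *\<^sub>R Ps i)"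
proof -
  define p where "p t = (\<Sum>i<r. phi i (t * h) *\<^sub>R Ps i)" for t
  have p_comp: "p t $ k = (\<Sum>i<r. Ps i $ k * phi i (t * h))" for t k
    by (simp add: p_def sum_component mult.commute)
  have residual_cont: "continuous_on {0..1} (\<lambda>t. w t $ k - (\<Sum>i<r. Ps i $ k * phi i (t * h)))" for k
    using basis w by (intro continuous_intros) auto
  have p_cont: "continuous_on {0..1} p"
    unfolding p_def by (rule continuous_on_Yh_comb[OF basis])
  have "integral {0..1} (\<lambda>\<tau>. v \<tau> * p \<tau>) = integral {0..1} (\<lambda>\<tau>. v \<tau> * w \<tau>)"
    if v: "in_Yh phi r h v" for v
  proof -
    obtain Vs where Vs: "\<forall>\<tau>\<in>{0..1}. v \<tau> = (\<Sum>i<r. phi i (\<tau> * h) *\<^sub>R Vs i)"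
      using v unfolding in_Yh_def by blast
    have v_cont: "continuous_on {0..1} v"
      by (rule in_Yh_continuous_on[of r phi h, OF basis v])
    have "integral {0..1} (\<lambda>t. v t $ k * w t $ k) - integral {0..1} (\<lambda>t. v t $ k * p t $ k) =
          integral {0..1} (\<lambda>t. v t $ k * (w t $ k - p t $ k))" for k
      unfolding right_diff_distrib
      by (intro integral_diff[symmetric] integrable_continuous_interval continuous_intros v_cont w p_cont)
    also have "\<dots> k = integral {0..1} (\<lambda>t. (\<Sum>i<r. Vs i $ k * phi i (t * h)) *
                                             (w t $ k - (\<Sum>i<r. Ps i $ k * phi i (t * h))))" for k
      using Vs by (intro integral_cong) (simp add: p_comp sum_component mult.commute)
    also have "\<dots> k = 0" for k
      by (rule integral_sum_mult_eq_0[where f = "\<lambda>i t. phi i (t * h)", OF basis residual_cont orth])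
    finally show ?thesis
      using integral_vec_mult_component[OF v_cont p_cont] integral_vec_mult_component[OF v_cont w]
      by (simp add: vec_eq_iff)
  qed
  moreover have "in_Yh phi r h p"
    unfolding in_Yh_def p_def by blast
  ultimately show ?thesis
    unfolding is_proj_Yh_def p_def by blast
qed

lemma is_proj_Yh_exists:
  fixes w :: "real \<Rightarrow> real^'n"
  assumes basis: "\<And>i. i < r \<Longrightarrow> continuous_on {0..1} (\<lambda>t. phi i (t * h))"
    and w: "continuous_on {0..1} w"
  shows "\<exists>p. is_proj_Yh phi r h w p"
proof -
  have "continuous_on {0..1} (\<lambda>t. w t $ k)" for k
    using w by (intro continuous_intros)
  then have "\<forall>k. \<exists>c. \<forall>j<r. integral {0..1} (\<lambda>t. phi j (t * h) * (w t $ k - (\<Sum>i<r. c i * phi i (t * h)))) = 0"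
    using exists_orthogonal_residual[of 0 1 r "\<lambda>i t. phi i (t * h)", OF _ basis] by simp
  then obtain C where "\<forall>k. \<forall>j<r.
      integral {0..1} (\<lambda>t. phi j (t * h) * (w t $ k - (\<Sum>i<r. C k i * phi i (t * h)))) = 0"
    by (auto dest: choice)
  then have "is_proj_Yh phi r h w (\<lambda>t. \<Sum>i<r. phi i (t * h) *\<^sub>R (\<chi> k. C k i))"
    by (intro is_proj_Yh_if_orthogonal_components[of r phi h, OF basis w]) auto
  then show ?thesis
    by blast
qed

lemma Ph_eq_proj:
  assumes basis: "\<And>i. i < r \<Longrightarrow> continuous_on {0..1} (\<lambda>t. phi i (t * h))"
    and p: "is_proj_Yh phi r h w p" and \<tau>: "\<tau> \<in> {0..1}"
  shows "Ph phi r h w \<tau> = p \<tau>"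
  unfolding Ph_def
proof (rule the_equality)
  show "\<exists>p'. is_proj_Yh phi r h w p' \<and> p' \<tau> = p \<tau>"
    using p by blast
next
  fix y
  assume "\<exists>p'. is_proj_Yh phi r h w p' \<and> p' \<tau> = y"
  then show "y = p \<tau>"
    using is_proj_Yh_unique[of r phi h, OF basis _ p \<tau>] by metis
qed

text \<open>The inner product is the sum of the components of the entrywise product, so Galerkin
  orthogonality passes from the entrywise to the Euclidean inner product.\<close>
lemma is_proj_Yh_inner_orthogonal:
  fixes w p v :: "real \<Rightarrow> real^'n"
  assumes basis: "\<And>i. i < r \<Longrightarrow> continuous_on {0..1} (\<lambda>t. phi i (t * h))"
    and w: "continuous_on {0..1} w" and p: "is_proj_Yh phi r h w p" and v: "in_Yh phi r h v"
  shows "((\<lambda>\<tau>. v \<tau> \<bullet> (w \<tau> - p \<tau>)) has_integral 0) {0..1}"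
proof -
  have p_Y: "in_Yh phi r h p"
    using p unfolding is_proj_Yh_def by blast
  have v_cont: "continuous_on {0..1} v"
    by (rule in_Yh_continuous_on[of r phi h, OF basis v])
  have p_cont: "continuous_on {0..1} p"
    by (rule in_Yh_continuous_on[of r phi h, OF basis p_Y])
  have "((\<lambda>\<tau>. v \<tau> * w \<tau> - v \<tau> * p \<tau>) has_integral
          integral {0..1} (\<lambda>\<tau>. v \<tau> * w \<tau>) - integral {0..1} (\<lambda>\<tau>. v \<tau> * p \<tau>)) {0..1}"
    by (intro has_integral_diff integrable_integral integrable_continuous_interval
        continuous_on_vec_mult v_cont w p_cont)
  moreover have "integral {0..1} (\<lambda>\<tau>. v \<tau> * p \<tau>) = integral {0..1} (\<lambda>\<tau>. v \<tau> * w \<tau>)"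
    using p v unfolding is_proj_Yh_def by blast
  ultimately have "((\<lambda>\<tau>. v \<tau> * (w \<tau> - p \<tau>)) has_integral 0) {0..1}"
    by (simp only: right_diff_distrib diff_self)
  from has_integral_linear[OF this bounded_linear_inner_right[of 1]]
  have "((\<lambda>\<tau>. 1 \<bullet> (v \<tau> * (w \<tau> - p \<tau>))) has_integral 0) {0..1}"
    by (simp add: o_def)
  moreover have "(1::real^'n) \<bullet> (x * y) = x \<bullet> y" for x y
    by (simp add: inner_vec_def)
  ultimately show ?thesis
    by simp
qed

lemma has_real_derivative_integral_rescaled:
  fixes f :: "real \<Rightarrow> real"
  assumes f: "continuous_on {0..T} f" and h: "0 \<le> h" "h \<le> T" and \<tau>: "\<tau> \<in> {0..1}"
  shows "((\<lambda>\<tau>. integral {0..\<tau> * h} f) has_real_derivative h * f (\<tau> * h)) (at \<tau> within {0..1})"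
proof -
  have scale: "(\<lambda>\<tau>. \<tau> * h) ` {0..1} \<subseteq> {0..T}"
    using h by (auto intro: order_trans[OF mult_left_le_one_le])
  then have "\<tau> * h \<in> {0..T}"
    using \<tau> by (auto simp: image_subset_iff)
  then have d_integral: "((\<lambda>s. integral {0..s} f) has_vector_derivative f (\<tau> * h))
      (at (\<tau> * h) within (\<lambda>\<tau>. \<tau> * h) ` {0..1})"
    by (rule has_vector_derivative_within_subset[OF integral_has_vector_derivative[OF f] scale])
  have "((\<lambda>\<tau>. \<tau> * h) has_real_derivative h) (at \<tau> within {0..1})"
    by (auto intro!: derivative_eq_intros)
  then have d_scale: "((\<lambda>\<tau>. \<tau> * h) has_vector_derivative h) (at \<tau> within {0..1})"
    by (simp add: has_real_derivative_iff_has_vector_derivative)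
  from vector_diff_chain_within[OF d_scale d_integral]
  show ?thesis
    by (simp add: has_real_derivative_iff_has_vector_derivative o_def)
qed

lemma Xh_has_vector_derivative:
  fixes W :: "real^'n" and Ws :: "nat \<Rightarrow> real^'n"
  assumes phi: "\<And>i. i < r \<Longrightarrow> continuous_on {0..T} (phi i)" and h: "0 \<le> h" "h \<le> T"
    and \<tau>: "\<tau> \<in> {0..1}"
  shows "((\<lambda>\<tau>. W + (\<Sum>i<r. integral {0..\<tau> * h} (phi i) *\<^sub>R Ws i)) has_vector_derivative
           h *\<^sub>R (\<Sum>i<r. phi i (\<tau> * h) *\<^sub>R Ws i)) (at \<tau> within {0..1})"
proof -
  have "((\<lambda>\<tau>. integral {0..\<tau> * h} (phi i) *\<^sub>R Ws i) has_vector_derivative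
          (h * phi i (\<tau> * h)) *\<^sub>R Ws i) (at \<tau> within {0..1})" if "i < r" for i
    using has_vector_derivative_scaleR[OF has_real_derivative_integral_rescaled[OF phi[OF that] h \<tau>]
        has_vector_derivative_const[of "Ws i"]]
    by simp
  then have "((\<lambda>\<tau>. W + (\<Sum>i<r. integral {0..\<tau> * h} (phi i) *\<^sub>R Ws i)) has_vector_derivative
           0 + (\<Sum>i<r. (h * phi i (\<tau> * h)) *\<^sub>R Ws i)) (at \<tau> within {0..1})"
    by (intro has_vector_derivative_add has_vector_derivative_const has_vector_derivative_sum) simp
  then show ?thesis
    by (simp add: scaleR_sum_right)
qed

lemma has_real_derivative_compose_gradient:
  assumes "(u has_vector_derivative u') (at t within S)" and "(E has_derivative (\<lambda>z. g \<bullet> z)) (at (u t))"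
  shows "((\<lambda>t. E (u t)) has_real_derivative g \<bullet> u') (at t within S)"
  using has_derivative_compose[OF assms(1)[unfolded has_vector_derivative_def] assms(2)]
  unfolding has_field_derivative_def
  by (rule has_derivative_eq_rhs) (simp add: fun_eq_iff inner_scaleR_right mult.commute)

lemma quadratic_energy_has_derivative:
  fixes A :: "real^'n^'n"
  assumes A: "transpose A = A" and V: "(V has_derivative (\<lambda>z. g \<bullet> z)) (at y)"
  shows "((\<lambda>y. 1/2 * (y \<bullet> (A *v y)) + V y) has_derivative (\<lambda>z. (A *v y + g) \<bullet> z)) (at y)"
proof -
  have sym: "x \<bullet> (A *v z) = (A *v x) \<bullet> z" for x z
  proof -
    have "x \<bullet> (A *v z) = (x v* A) \<bullet> z"
      by (simp add: dot_lmul_matrix)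
    also have "x v* A = transpose A *v x"
      by simp
    finally show ?thesis
      using A by simp
  qed
  have "((\<lambda>y. y \<bullet> (A *v y)) has_derivative (\<lambda>z. y \<bullet> (A *v z) + z \<bullet> (A *v y))) (at y)"
    by (rule has_derivative_inner[OF has_derivative_ident
        bounded_linear.has_derivative[OF matrix_vector_mul_bounded_linear has_derivative_ident]])
  then have "((\<lambda>y. 1/2 * (y \<bullet> (A *v y)) + V y) has_derivative
               (\<lambda>z. 1/2 * (y \<bullet> (A *v z) + z \<bullet> (A *v y)) + g \<bullet> z)) (at y)"
    by (intro has_derivative_add V has_derivative_mult_right)
  moreover have "1/2 * (y \<bullet> (A *v z) + z \<bullet> (A *v y)) + g \<bullet> z = (A *v y + g) \<bullet> z" for z
    using sym[of y z] inner_commute[of z "A *v y"] by (simp add: inner_add_left)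
  ultimately show ?thesis
    by (simp add: fun_eq_iff)
qed

lemma quadratic_energy_collocation_has_real_derivative:
  fixes A M :: "real^'n^'n"
  assumes A: "transpose A = A" and V: "(V has_derivative (\<lambda>z. g \<bullet> z)) (at (u \<tau>))"
    and u: "(u has_vector_derivative h *\<^sub>R v) (at \<tau> within S)"
    and collocation: "M *v v + A *v u \<tau> = - p"
  shows "((\<lambda>\<tau>. 1/2 * (u \<tau> \<bullet> (A *v u \<tau>)) + V (u \<tau>)) has_real_derivative
           h * (v \<bullet> (g - p)) - h * (v \<bullet> (M *v v))) (at \<tau> within S)"
proof -
  have Au: "A *v u \<tau> = - p - M *v v"
    using collocation by (simp add: eq_diff_eq add.commute)
  have rate: "(A *v u \<tau> + g) \<bullet> (h *\<^sub>R v) = h * (v \<bullet> (g - p)) - h * (v \<bullet> (M *v v))"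
    unfolding Au by (simp add: inner_add_left inner_diff_left inner_diff_right inner_commute[of v] algebra_simps)
  from has_real_derivative_compose_gradient[OF u quadratic_energy_has_derivative[OF A V]]
  show ?thesis
    by (simp only: rate)
qed

lemma decreasing_if_derivative_zero_mean_minus_nonneg:
  fixes F q s :: "real \<Rightarrow> real"
  assumes ab: "a \<le> b"
    and F: "\<And>t. t \<in> {a..b} \<Longrightarrow> (F has_real_derivative q t - s t) (at t within {a..b})"
    and q: "(q has_integral 0) {a..b}" and s: "\<And>t. t \<in> {a..b} \<Longrightarrow> 0 \<le> s t"
  shows "F b \<le> F a"
proof -
  have "((\<lambda>t. q t - s t) has_integral F b - F a) {a..b}"
    using F by (intro fundamental_theorem_of_calculus ab) (simp add: has_real_derivative_iff_has_vector_derivative)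
  from has_integral_diff[OF q this] have "(s has_integral F a - F b) {a..b}"
    by simp
  then have "0 \<le> F a - F b"
    using s by (rule has_integral_nonneg)
  then show ?thesis
    by simp
qed

theorem theorem3p2:
  fixes A \<Gamma> :: "real^'n^'n"
    and V :: "real^'n \<Rightarrow> real"
    and gradV :: "real^'n \<Rightarrow> real^'n"
    and G :: "real^'n \<Rightarrow> real^'n^'n"
    and phi :: "nat \<Rightarrow> real \<Rightarrow> real"
    and r :: nat
    and T h :: real
    and y0 W :: "real^'n"
    and Ws :: "nat \<Rightarrow> real^'n"
    and U :: "real^'n \<Rightarrow> real"
    and u u' :: "real \<Rightarrow> real^'n"
  assumes T_pos: "T > 0"
    and A_sym: "transpose A = A"
    and A_psd: "\<forall>v. 0 \<le> v \<bullet> (A *v v)"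
    and V_grad: "\<forall>y. (V has_derivative (\<lambda>z. gradV y \<bullet> z)) (at y)"
    and V_C2: "\<exists>D :: real^'n \<Rightarrow> ((real^'n) \<Rightarrow>\<^sub>L (real^'n)).
                 (\<forall>y. (gradV has_derivative blinfun_apply (D y)) (at y)) \<and> continuous_on UNIV D"
    and U_def: "\<forall>y. U y = 1/2 * (y \<bullet> (A *v y)) + V y"
    and G_cont: "continuous_on UNIV G"
    and G_sym: "\<forall>y. transpose (G y) = G y"
    and Gamma_sym: "transpose \<Gamma> = \<Gamma>"
    and Gamma_pd: "\<forall>v. v \<noteq> 0 \<longrightarrow> 0 < v \<bullet> (\<Gamma> *v v)"
    and G_bound: "\<forall>y v. v \<noteq> 0 \<longrightarrow> v \<bullet> (\<Gamma> *v v) \<le> v \<bullet> (G y *v v)"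
    and phi_cont: "\<forall>i<r. continuous_on {0..T} (phi i)"
    and phi_indep: "\<forall>c :: nat \<Rightarrow> real. (\<forall>t\<in>{0..T}. (\<Sum>i<r. c i * phi i t) = 0) \<longrightarrow> (\<forall>i<r. c i = 0)"
    and h_pos: "0 < h" and h_le: "h \<le> T"
    and u_def: "\<forall>\<tau>. u \<tau> = W + (\<Sum>i<r. integral {0..\<tau> * h} (phi i) *\<^sub>R Ws i)"
    and u'_def: "\<forall>\<tau>. u' \<tau> = (\<Sum>i<r. phi i (\<tau> * h) *\<^sub>R Ws i)"
    and u_init: "u 0 = y0"
    and colloc: "\<forall>\<tau>\<in>{0..1}. G (u \<tau>) *v u' \<tau> + A *v u \<tau> = - Ph phi r h (\<lambda>s. gradV (u s)) \<tau>"
  shows "U (u 1) \<le> U y0"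
proof -
  have h: "0 \<le> h"
    using h_pos by simp
  have basis: "\<And>i. i < r \<Longrightarrow> continuous_on {0..1} (\<lambda>t. phi i (t * h))"
    using phi_cont h h_le by (intro continuous_on_rescale[of T]) auto
  have u_eq: "u = (\<lambda>\<tau>. W + (\<Sum>i<r. integral {0..\<tau> * h} (phi i) *\<^sub>R Ws i))"
    using u_def by auto
  have du: "(u has_vector_derivative h *\<^sub>R u' \<tau>) (at \<tau> within {0..1})" if "\<tau> \<in> {0..1}" for \<tau>
    unfolding u_eq u'_def[rule_format]
    by (rule Xh_has_vector_derivative[OF _ h h_le that]) (use phi_cont in simp)
  then have u_cont: "continuous_on {0..1} u"
    using continuous_on_eq_continuous_within has_vector_derivative_continuous by blast
  obtain D where "\<forall>y. (gradV has_derivative blinfun_apply (D y)) (at y)"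
    using V_C2 by blast
  then have "continuous_on UNIV gradV"
    by (intro continuous_at_imp_continuous_on) (blast intro: has_derivative_continuous)
  then have w: "continuous_on {0..1} (\<lambda>\<tau>. gradV (u \<tau>))"
    by (rule continuous_on_compose2[OF _ u_cont]) simp
  then obtain p where p: "is_proj_Yh phi r h (\<lambda>\<tau>. gradV (u \<tau>)) p"
    using is_proj_Yh_exists[of r phi h, OF basis] by blast
  have "in_Yh phi r h u'"
    unfolding in_Yh_def using u'_def by blast
  from has_integral_mult_right[OF is_proj_Yh_inner_orthogonal[of r phi h, OF basis w p this], of h]
  have orth: "((\<lambda>\<tau>. h * (u' \<tau> \<bullet> (gradV (u \<tau>) - p \<tau>))) has_integral 0) {0..1}"
    by simp
  have U_eq: "U = (\<lambda>y. 1/2 * (y \<bullet> (A *v y)) + V y)"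
    using U_def by auto
  have dU: "((\<lambda>\<tau>. U (u \<tau>)) has_real_derivative
          h * (u' \<tau> \<bullet> (gradV (u \<tau>) - p \<tau>)) - h * (u' \<tau> \<bullet> (G (u \<tau>) *v u' \<tau>))) (at \<tau> within {0..1})"
    if \<tau>: "\<tau> \<in> {0..1}" for \<tau>
    unfolding U_eq using colloc \<tau> Ph_eq_proj[of r phi h, OF basis p \<tau>]
    by (intro quadratic_energy_collocation_has_real_derivative[OF A_sym V_grad[rule_format] du[OF \<tau>]]) simp
  have "0 \<le> h * (u' \<tau> \<bullet> (G (u \<tau>) *v u' \<tau>))" for \<tau>
  proof -
    have "0 \<le> v \<bullet> (G y *v v)" for y v
      using Gamma_pd[rule_format, of v] G_bound[rule_format, of v y] by (cases "v = 0") auto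
    then show ?thesis
      using h by simp
  qed
  then have "U (u 1) \<le> U (u 0)"
    by (intro decreasing_if_derivative_zero_mean_minus_nonneg[of 0 1 "\<lambda>\<tau>. U (u \<tau>)", OF _ dU orth]) auto
  then show ?thesis
    using u_init by simp
qed

end
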